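(* Let $G=(V,E)$ be a graph, let $\overline{E}$ be the set of all unordered pairs of independent edges of $G$, let $k=|\overline{E}|$, and fix an ordering $\sigma(0),\dots,\sigma(k-1)$ of $\overline{E}$. Let $0\le i_\nu\le k$ and let $y_\nu\in\{0,1\}^{i_\nu}$ be a partial candidate solution. Suppose there is an array $y_\mu\in\{0,1\}^{k}$ that extends $y_\nu$ (i.e., $y_\mu[j]=y_\nu[j]$ for all $j<i_\nu$; possibly $y_\mu=y_\nu$ when $i_\nu=k$) and that is a TRUE solution of $G$. Then the graph $G_\nu^*$ is planar.
   Context: An edge $e$ is crossed in $y_\nu$ if $e\in\sigma(j)$ for some $j<i_\nu$ with $y_\nu[j]=1$. An edge $e$ is saturated in $y_\nu$ if at least one of the following holds: (a) $e$ is crossed in $y_\nu$; (b) every index $j$ such that $e\in\sigma(j)$ satisfies $j<i_\nu$; (c) for every pair $\{e,f\}\in\overline{E}$ containing $e$, the other edge $f$ is crossed in $y_\nu$. $G_\nu$ is the subgraph of $G$ formed by the saturated edges (with their end-vertices). $G_\nu^*$ is obtained from $G_\nu$ by, for each $j<i_\nu$ with $y_\nu[j]=1$ and $\sigma(j)=\{(u_1,v_1),(u_2,v_2)\}$, removing these two edges and adding a new dummy vertex adjacent to $u_1,v_1,u_2,v_2$ (this is well defined when every edge lies in at most one such pair, which is the case under the hypothesis of the claim). A binary array $y$ of length $k$ is a TRUE solution of $G$ if (1) every edge of $G$ belongs to at most one pair $\sigma(i)$ with $y[i]=1$, and (2) the graph obtained from $G$ by replacing, for each $i$ with $y[i]=1$,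 the two edges of $\sigma(i)$ by a new dummy vertex adjacent to their four end-vertices, is planar. *)

theory Defs
  imports "HOL-Analysis.Analysis"
begin

definition simple_graph :: "'v set \<Rightarrow> 'v set set \<Rightarrow> bool" where
  "simple_graph V E \<longleftrightarrow> finite V \<and>
     (\<forall>e\<in>E. \<exists>u v. e = {u, v} \<and> u \<noteq> v \<and> u \<in> V \<and> v \<in> V)"

definition planar :: "'a set \<Rightarrow> 'a set set \<Rightarrow> bool" where
  "planar V E \<longleftrightarrow>
     (\<exists>(pos :: 'a \<Rightarrow> complex) (c :: 'a set \<Rightarrow> real \<Rightarrow> complex).
        inj_on pos V \<and>
        (\<forall>e\<in>E. arc (c e) \<and>
           (\<exists>u v. e = {u, v} \<and> u \<noteq> v \<and> pathstart (c e) = pos u \<and> pathfinish (c e) = pos v) \<and>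
           path_image (c e) \<inter> pos ` V \<subseteq> pos ` e) \<and>
        (\<forall>e\<in>E. \<forall>f\<in>E. e \<noteq> f \<longrightarrow> path_image (c e) \<inter> path_image (c f) \<subseteq> pos ` (e \<inter> f)))"

definition indep_pairs :: "'v set set \<Rightarrow> 'v set set set" where
  "indep_pairs E = {{e, f} | e f. e \<in> E \<and> f \<in> E \<and> e \<inter> f = {}}"

definition crossed :: "(nat \<Rightarrow> 'v set set) \<Rightarrow> bool list \<Rightarrow> 'v set \<Rightarrow> bool" where
  "crossed \<sigma> y e \<longleftrightarrow> (\<exists>j < length y. y ! j \<and> e \<in> \<sigma> j)"

definition saturated :: "'v set set \<Rightarrow> (nat \<Rightarrow> 'v set set) \<Rightarrow> bool list \<Rightarrow> 'v set \<Rightarrow> bool" where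
  "saturated E \<sigma> y e \<longleftrightarrow>
     crossed \<sigma> y e \<or>
     (\<forall>j < card (indep_pairs E). e \<in> \<sigma> j \<longrightarrow> j < length y) \<or>
     (\<forall>f. {e, f} \<in> indep_pairs E \<longrightarrow> crossed \<sigma> y f)"

definition sat_edges :: "'v set set \<Rightarrow> (nat \<Rightarrow> 'v set set) \<Rightarrow> bool list \<Rightarrow> 'v set set" where
  "sat_edges E \<sigma> y = {e \<in> E. saturated E \<sigma> y e}"

definition sat_vertices :: "'v set set \<Rightarrow> (nat \<Rightarrow> 'v set set) \<Rightarrow> bool list \<Rightarrow> 'v set" where
  "sat_vertices E \<sigma> y = \<Union> (sat_edges E \<sigma> y)"

text \<open>Replacement operation: for each j < length y with y[j] = 1, remove the two
edges of sigma(j) and add a new dummy vertex (Inr j) adjacent to their four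
end-vertices.  Original vertices are tagged Inl.\<close>

definition repl_vertices :: "'v set \<Rightarrow> (nat \<Rightarrow> 'v set set) \<Rightarrow> bool list \<Rightarrow> ('v + nat) set" where
  "repl_vertices V \<sigma> y = Inl ` V \<union> {Inr j | j. j < length y \<and> y ! j}"

definition repl_edges :: "'v set set \<Rightarrow> (nat \<Rightarrow> 'v set set) \<Rightarrow> bool list \<Rightarrow> ('v + nat) set set" where
  "repl_edges E \<sigma> y =
     {Inl ` e | e. e \<in> E \<and> \<not> crossed \<sigma> y e} \<union>
     {{Inr j, Inl u} | j u. j < length y \<and> y ! j \<and> u \<in> \<Union> (\<sigma> j)}"

definition G_star_vertices :: "'v set set \<Rightarrow> (nat \<Rightarrow> 'v set set) \<Rightarrow> bool list \<Rightarrow> ('v + nat) set" where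
  "G_star_vertices E \<sigma> y = repl_vertices (sat_vertices E \<sigma> y) \<sigma> y"

definition G_star_edges :: "'v set set \<Rightarrow> (nat \<Rightarrow> 'v set set) \<Rightarrow> bool list \<Rightarrow> ('v + nat) set set" where
  "G_star_edges E \<sigma> y = repl_edges (sat_edges E \<sigma> y) \<sigma> y"

definition true_solution :: "'v set \<Rightarrow> 'v set set \<Rightarrow> (nat \<Rightarrow> 'v set set) \<Rightarrow> bool list \<Rightarrow> bool" where
  "true_solution V E \<sigma> y \<longleftrightarrow>
     length y = card (indep_pairs E) \<and>
     (\<forall>e\<in>E. card {i. i < length y \<and> y ! i \<and> e \<in> \<sigma> i} \<le> 1) \<and>
     planar (repl_vertices V \<sigma> y) (repl_edges E \<sigma> y)"

end

theory Submission
  imports Defs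
begin

text \<open>Every edge of the graph \<open>G\<^sub>\<nu>\<^sup>*\<close> is also an edge of the graph obtained from \<open>G\<close> by
  the replacements prescribed by \<open>y\<^sub>\<mu>\<close>, and likewise for vertices; since planarity is
  inherited by subgraphs, \<open>G\<^sub>\<nu>\<^sup>*\<close> is planar. The only point is that a saturated edge
  \<open>e\<close> that is not crossed in \<open>y\<^sub>\<nu>\<close> stays uncrossed in \<open>y\<^sub>\<mu>\<close>. A crossing at a position
  \<open>j \<ge> i\<^sub>\<nu>\<close> rules out saturation by (b), and by (c) the partner \<open>f\<close> of \<open>e\<close> in \<open>\<sigma>(j)\<close> is
  already crossed at some position \<open>j' < i\<^sub>\<nu>\<close>; then \<open>f\<close> is crossed twice in \<open>y\<^sub>\<mu>\<close>,
  contradicting condition (1) of a TRUE solution.\<close>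

lemma planar_subgraph:
  assumes "planar V E" "V' \<subseteq> V" "E' \<subseteq> E"
  shows "planar V' E'"
proof -
  obtain pos :: "'a \<Rightarrow> complex" and c where
    inj: "inj_on pos V" and
    arcs: "\<forall>e\<in>E. arc (c e) \<and>
           (\<exists>u v. e = {u, v} \<and> u \<noteq> v \<and> pathstart (c e) = pos u \<and> pathfinish (c e) = pos v) \<and>
           path_image (c e) \<inter> pos ` V \<subseteq> pos ` e" and
    disjoint: "\<forall>e\<in>E. \<forall>f\<in>E. e \<noteq> f \<longrightarrow> path_image (c e) \<inter> path_image (c f) \<subseteq> pos ` (e \<inter> f)"
    using assms(1) unfolding planar_def by blast
  have "inj_on pos V'"
    using inj assms(2) by (rule inj_on_subset)
  moreover have "path_image (c e) \<inter> pos ` V' \<subseteq> pos ` e" if "e \<in> E'" for e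
    using arcs assms that by blast
  ultimately show ?thesis
    unfolding planar_def using arcs disjoint assms(3)
    by (intro exI[of _ pos] exI[of _ c]) (simp add: subset_iff)
qed

lemma sat_vertices_subset:
  assumes "simple_graph V E"
  shows "sat_vertices E \<sigma> y \<subseteq> V"
proof -
  have "e \<subseteq> V" if "e \<in> E" for e
    using assms that unfolding simple_graph_def by force
  then show ?thesis
    unfolding sat_vertices_def sat_edges_def by blast
qed

lemma nth_of_take_eq:
  assumes "take (length y) y' = y" "j < length y"
  shows "y' ! j = y ! j" "j < length y'"
  using assms by (metis nth_take, metis length_take min.strict_boundedE)

lemma repl_vertices_take_eq_subset:
  assumes "V' \<subseteq> V" "take (length y) y' = y"
  shows "repl_vertices V' \<sigma> y \<subseteq> repl_vertices V \<sigma> y'"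
  using assms(1) nth_of_take_eq[OF assms(2)] unfolding repl_vertices_def by auto

lemma repl_edges_take_eq_subset:
  assumes "E' \<subseteq> E" "take (length y) y' = y"
    and "\<And>e. e \<in> E' \<Longrightarrow> crossed \<sigma> y' e \<Longrightarrow> crossed \<sigma> y e"
  shows "repl_edges E' \<sigma> y \<subseteq> repl_edges E \<sigma> y'"
proof
  fix x assume "x \<in> repl_edges E' \<sigma> y"
  then consider (kept) e where "x = Inl ` e" "e \<in> E'" "\<not> crossed \<sigma> y e"
    | (star) j u where "x = {Inr j, Inl u}" "j < length y" "y ! j" "u \<in> \<Union> (\<sigma> j)"
    unfolding repl_edges_def by blast
  then show "x \<in> repl_edges E \<sigma> y'"
  proof cases
    case kept
    then show ?thesis
      using assms(1,3) unfolding repl_edges_def by blast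
  next
    case star
    then show ?thesis
      using nth_of_take_eq[OF assms(2)] unfolding repl_edges_def by blast
  qed
qed

lemma indep_pairs_partner:
  assumes "p \<in> indep_pairs E" "e \<in> p"
  shows "\<exists>f. p = {e, f} \<and> f \<in> E"
  using assms unfolding indep_pairs_def by (auto simp: insert_commute)

lemma crossed_at_most_once:
  assumes "\<forall>f\<in>E. card {i. i < length y \<and> y ! i \<and> f \<in> \<sigma> i} \<le> 1"
    and "f \<in> E" "j < length y" "y ! j" "f \<in> \<sigma> j" "j' < length y" "y ! j'" "f \<in> \<sigma> j'"
  shows "j = j'"
proof -
  let ?I = "{i. i < length y \<and> y ! i \<and> f \<in> \<sigma> i}"
  have "card ?I \<le> Suc 0" "finite ?I"
    using assms(1,2) by auto
  then show ?thesis
    using assms(3-) card_le_Suc0_iff_eq by blast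
qed

lemma saturated_crossed_in_extension:
  assumes \<sigma>: "\<And>j. j < card (indep_pairs E) \<Longrightarrow> \<sigma> j \<in> indep_pairs E"
    and len: "length y' = card (indep_pairs E)"
    and prefix: "take (length y) y' = y"
    and once: "\<forall>f\<in>E. card {i. i < length y' \<and> y' ! i \<and> f \<in> \<sigma> i} \<le> 1"
    and sat: "saturated E \<sigma> y e"
    and crossed': "crossed \<sigma> y' e"
  shows "crossed \<sigma> y e"
proof (rule ccontr)
  assume uncrossed: "\<not> crossed \<sigma> y e"
  obtain j where j: "j < length y'" "y' ! j" "e \<in> \<sigma> j"
    using crossed' unfolding crossed_def by blast
  have "\<not> j < length y"
    using j uncrossed nth_of_take_eq[OF prefix] unfolding crossed_def by auto
  then have partners_crossed: "\<forall>f. {e, f} \<in> indep_pairs E \<longrightarrow> crossed \<sigma> y f"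
    using sat uncrossed j len unfolding saturated_def by auto
  obtain f where f: "\<sigma> j = {e, f}" "f \<in> E"
    using indep_pairs_partner[OF \<sigma>] j len by metis
  then obtain j' where j': "j' < length y" "y ! j'" "f \<in> \<sigma> j'"
    using partners_crossed \<sigma>[of j] j len unfolding crossed_def by auto
  have "j = j'"
    using crossed_at_most_once[OF once f(2) j(1,2)] f(1) j' nth_of_take_eq[OF prefix] by auto
  then show False
    using \<open>\<not> j < length y\<close> j'(1) by simp
qed

theorem lemma3:
  fixes V :: "'v set" and E :: "'v set set" and \<sigma> :: "nat \<Rightarrow> 'v set set"
    and y_nu y_mu :: "bool list"
  assumes "simple_graph V E"
    and "bij_betw \<sigma> {..<card (indep_pairs E)} (indep_pairs E)"
    and "length y_nu \<le> card (indep_pairs E)"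
    and "length y_mu = card (indep_pairs E)"
    and "take (length y_nu) y_mu = y_nu"
    and "true_solution V E \<sigma> y_mu"
  shows "planar (G_star_vertices E \<sigma> y_nu) (G_star_edges E \<sigma> y_nu)"
proof -
  have \<sigma>: "\<And>j. j < card (indep_pairs E) \<Longrightarrow> \<sigma> j \<in> indep_pairs E"
    using assms(2) unfolding bij_betw_def by blast
  have once: "\<forall>f\<in>E. card {i. i < length y_mu \<and> y_mu ! i \<and> f \<in> \<sigma> i} \<le> 1"
    and planar_mu: "planar (repl_vertices V \<sigma> y_mu) (repl_edges E \<sigma> y_mu)"
    using assms(6) unfolding true_solution_def by auto
  have "G_star_vertices E \<sigma> y_nu \<subseteq> repl_vertices V \<sigma> y_mu"
    unfolding G_star_vertices_def
    using sat_vertices_subset[OF assms(1)] assms(5) by (rule repl_vertices_take_eq_subset)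
  moreover have "G_star_edges E \<sigma> y_nu \<subseteq> repl_edges E \<sigma> y_mu"
    unfolding G_star_edges_def
  proof (rule repl_edges_take_eq_subset[OF _ assms(5)])
    show "sat_edges E \<sigma> y_nu \<subseteq> E"
      unfolding sat_edges_def by blast
    show "crossed \<sigma> y_nu e" if "e \<in> sat_edges E \<sigma> y_nu" "crossed \<sigma> y_mu e" for e
      using saturated_crossed_in_extension[OF \<sigma> assms(4,5) once] that
      unfolding sat_edges_def by blast
  qed
  ultimately show ?thesis
    using planar_mu by (rule planar_subgraph[rotated])
qed

end
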